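(* Let $\mathbb{F}\subset\mathbb{K}$ be fields of characteristic zero, $n$ a positive integer, and $A_{n}\colon\mathbb{F}^{n}\to\mathbb{K}$ a symmetric $n$-additive mapping such that $f(x)=A_{n}(x,\ldots,x)$ satisfies $f(x^{2})=2^{n}x^{n}f(x)$ for all $x\in\mathbb{F}$. Then for every $k\in\{0,1,\ldots,n-1\}$, \[ A_{n}(x_{1},\ldots,x_{k},1,\ldots,1)=0\qquad(x_{1},\ldots,x_{k}\in\mathbb{F}), \] where $1$ is repeated $n-k$ times. Moreover, $A_{n}(x^{2},x,\ldots,x)=2x\,A_{n}(x,\ldots,x)$ for all $x\in\mathbb{F}$ (with $x$ repeated $n-1$ times on the left).
   Context: A map $A\colon\mathbb{F}^{n}\to\mathbb{K}$ is $n$-additive if it is additive in each variable separately; symmetric means invariant under permutations of its arguments. *)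

theory Defs
  imports Main "HOL-Library.Multiset"
begin

text \<open>The field F is a subfield of the field K (K of characteristic zero,
  hence so is F). Elements of F^n are represented as lists of length n
  with entries in F.\<close>

definition subfield :: "'k::field set \<Rightarrow> bool" where
  "subfield F \<longleftrightarrow> 0 \<in> F \<and> 1 \<in> F \<and>
     (\<forall>x\<in>F. \<forall>y\<in>F. x + y \<in> F \<and> x - y \<in> F \<and> x * y \<in> F) \<and>
     (\<forall>x\<in>F. x \<noteq> 0 \<longrightarrow> inverse x \<in> F)"

definition n_additive :: "'k::field set \<Rightarrow> nat \<Rightarrow> ('k list \<Rightarrow> 'k) \<Rightarrow> bool" where
  "n_additive F n A \<longleftrightarrow>
     (\<forall>xs y i. length xs = n \<and> set xs \<subseteq> F \<and> y \<in> F \<and> i < n \<longrightarrow>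
        A (xs[i := xs ! i + y]) = A xs + A (xs[i := y]))"

definition symmetric_map :: "'k::field set \<Rightarrow> nat \<Rightarrow> ('k list \<Rightarrow> 'k) \<Rightarrow> bool" where
  "symmetric_map F n A \<longleftrightarrow>
     (\<forall>xs ys. length xs = n \<and> set xs \<subseteq> F \<and> mset ys = mset xs \<longrightarrow> A ys = A xs)"

end

theory Submission
  imports Defs "HOL-Computational_Algebra.Polynomial"
begin

text \<open>Write \<open>f(x) = A(x,\<dots>,x)\<close>. By additivity and symmetry, \<open>f(u + N v)\<close> for natural \<open>N\<close> is
  the polynomial \<open>\<Sum>_j C(n,j) A(u,\<dots>,u,v,\<dots>,v) N^j\<close> (\<open>j\<close> copies of \<open>v\<close>); in characteristic zero a
  polynomial vanishing at all naturals is zero, so such identities may be compared coefficientwise.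
  Expanding both sides of \<open>f((x + N)^2) = 2^n (x + N)^n f(x + N)\<close> this way, with
  \<open>(x + N)^2 = (x^2 + 2N x) + N^2 \<cdot> 1\<close>, gives a polynomial identity in \<open>N\<close>. If \<open>A\<close> already
  vanishes whenever fewer than \<open>k\<close> arguments differ from \<open>1\<close>, the coefficient of \<open>N^(2n-k)\<close> has a
  single surviving term on each side, giving \<open>(2^k - 2^n) A(x,\<dots>,x,1,\<dots>,1) = 0\<close>: the diagonal of
  the \<open>k\<close>-additive map \<open>(x\<^sub>1,\<dots>,x\<^sub>k) \<mapsto> A(x\<^sub>1,\<dots>,x\<^sub>k,1,\<dots>,1)\<close> vanishes, hence by polarization the
  map itself. Once this holds for all \<open>k < n\<close>, the coefficient of \<open>N^(n-1)\<close> gives the second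
  claim.\<close>

lemma sum_sum_eq_single:
  assumes "finite I" "\<And>j. finite (J j)" "j0 \<in> I" "i0 \<in> J j0"
    and "\<And>j i. j \<in> I \<Longrightarrow> i \<in> J j \<Longrightarrow> (j, i) \<noteq> (j0, i0) \<Longrightarrow> g j i = 0"
  shows "(\<Sum>j\<in>I. \<Sum>i\<in>J j. g j i) = g j0 i0"
proof -
  have "(\<Sum>j\<in>I. \<Sum>i\<in>J j. g j i) = (\<Sum>i\<in>J j0. g j0 i) + (\<Sum>j\<in>I - {j0}. \<Sum>i\<in>J j. g j i)"
    using assms(1,3) by (rule sum.remove)
  also have "(\<Sum>j\<in>I - {j0}. \<Sum>i\<in>J j. g j i) = 0"
    using assms(5) by (intro sum.neutral ballI) auto
  also have "(\<Sum>i\<in>J j0. g j0 i) = g j0 i0 + (\<Sum>i\<in>J j0 - {i0}. g j0 i)"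
    using assms(2,4) by (rule sum.remove)
  also have "(\<Sum>i\<in>J j0 - {i0}. g j0 i) = 0"
    using assms(3,5) by (intro sum.neutral ballI) auto
  finally show ?thesis by simp
qed

lemma coeff_sum_sum_monom_single:
  assumes "finite I" "\<And>j. finite (J j)" "j0 \<in> I" "i0 \<in> J j0" "e j0 i0 = d"
    and "\<And>j i. j \<in> I \<Longrightarrow> i \<in> J j \<Longrightarrow> (j, i) \<noteq> (j0, i0) \<Longrightarrow> e j i = d \<Longrightarrow> c j i = 0"
  shows "coeff (\<Sum>j\<in>I. \<Sum>i\<in>J j. monom (c j i) (e j i)) d = c j0 i0"
proof -
  have "coeff (\<Sum>j\<in>I. \<Sum>i\<in>J j. monom (c j i) (e j i)) d
      = (\<Sum>j\<in>I. \<Sum>i\<in>J j. if e j i = d then c j i else 0)"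
    by (simp add: coeff_sum coeff_monom)
  also have "\<dots> = (if e j0 i0 = d then c j0 i0 else 0)"
    using assms(1-4) by (rule sum_sum_eq_single) (use assms(6) in auto)
  finally show ?thesis using assms(5) by simp
qed

lemma sum_choose_Suc_split:
  fixes f :: "nat \<Rightarrow> 'a::comm_semiring_1"
  shows "(\<Sum>j\<le>Suc m. of_nat (Suc m choose j) * f j)
       = (\<Sum>j\<le>m. of_nat (m choose j) * f j) + (\<Sum>j\<le>m. of_nat (m choose j) * f (Suc j))"
proof -
  have shifted: "(\<Sum>j\<le>Suc m. of_nat (Suc m choose j) * f j)
      = f 0 + (\<Sum>j\<le>m. of_nat (m choose j) * f (Suc j)) + (\<Sum>j\<le>m. of_nat (m choose Suc j) * f (Suc j))"
    by (subst sum.atMost_Suc_shift) (simp add: sum.distrib algebra_simps del: sum.atMost_Suc)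
  have "(\<Sum>j\<le>m. of_nat (m choose j) * f j) = (\<Sum>j\<le>Suc m. of_nat (m choose j) * f j)"
    by (simp add: binomial_eq_0)
  also have "\<dots> = f 0 + (\<Sum>j\<le>m. of_nat (m choose Suc j) * f (Suc j))"
    by (subst sum.atMost_Suc_shift) (simp del: sum.atMost_Suc)
  finally show ?thesis using shifted by (simp add: algebra_simps)
qed

lemma poly_eq_0_if_zero_at_nats:
  fixes p :: "'k::field_char_0 poly"
  assumes "\<And>N. poly p (of_nat N) = 0"
  shows "p = 0"
proof (rule ccontr)
  assume "p \<noteq> 0"
  then have "finite {x. poly p x = 0}" by (rule poly_roots_finite)
  moreover have "range (of_nat :: nat \<Rightarrow> 'k) \<subseteq> {x. poly p x = 0}" using assms by auto
  ultimately have "finite (range (of_nat :: nat \<Rightarrow> 'k))" by (rule finite_subset[rotated])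
  then show False using finite_imageD inj_of_nat by blast
qed

locale symmetric_multiadditive =
  fixes F :: "'k::field_char_0 set" and n :: nat and A :: "'k list \<Rightarrow> 'k"
  assumes subfield: "subfield F" and additive: "n_additive F n A"
    and symmetric: "symmetric_map F n A"
begin

lemma zero_in_F: "0 \<in> F" and one_in_F: "1 \<in> F"
  using subfield unfolding subfield_def by auto

lemma add_in_F: "x \<in> F \<Longrightarrow> y \<in> F \<Longrightarrow> x + y \<in> F"
  and mult_in_F: "x \<in> F \<Longrightarrow> y \<in> F \<Longrightarrow> x * y \<in> F"
  using subfield unfolding subfield_def by auto

lemma of_nat_in_F: "of_nat N \<in> F"
  by (induction N) (auto simp: zero_in_F one_in_F add_in_F add.commute)

lemma power_in_F: "x \<in> F \<Longrightarrow> x ^ k \<in> F"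
  by (induction k) (auto simp: one_in_F mult_in_F)

lemma A_mset_eq:
  assumes "length xs = n" "set xs \<subseteq> F" "mset ys = mset xs"
  shows "A ys = A xs"
  using symmetric assms unfolding symmetric_map_def by blast

lemma A_add_at:
  assumes "length pre + Suc (length R) = n" "set pre \<subseteq> F" "set R \<subseteq> F" "u \<in> F" "y \<in> F"
  shows "A (pre @ (u + y) # R) = A (pre @ u # R) + A (pre @ y # R)"
proof -
  let ?xs = "pre @ u # R"
  have "length ?xs = n" "set ?xs \<subseteq> F" "length pre < n"
    using assms by auto
  then have "A (?xs[length pre := ?xs ! length pre + y]) = A ?xs + A (?xs[length pre := y])"
    using additive \<open>y \<in> F\<close> unfolding n_additive_def by blast
  then show ?thesis by (simp add: list_update_append)
qed

lemma A_of_nat_mult_at: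
  assumes "length pre + Suc (length R) = n" "set pre \<subseteq> F" "set R \<subseteq> F" "v \<in> F"
  shows "A (pre @ (of_nat N * v) # R) = of_nat N * A (pre @ v # R)"
proof (induction N)
  case 0
  show ?case using A_add_at[OF assms(1-3) zero_in_F zero_in_F] by simp
next
  case (Suc N)
  have "A (pre @ (of_nat (Suc N) * v) # R) = A (pre @ (v + of_nat N * v) # R)"
    by (simp add: algebra_simps)
  also have "\<dots> = A (pre @ v # R) + A (pre @ (of_nat N * v) # R)"
    using assms by (intro A_add_at) (auto intro: mult_in_F of_nat_in_F)
  finally show ?case using Suc by (simp add: algebra_simps)
qed

lemma A_binomial_expansion:
  assumes "length pre + m = n" "set pre \<subseteq> F" "u \<in> F" "v \<in> F"
  shows "A (pre @ replicate m (u + of_nat N * v))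
     = (\<Sum>j\<le>m. of_nat (m choose j) * of_nat N ^ j * A (pre @ replicate (m - j) u @ replicate j v))"
  using assms(1,2)
proof (induction m arbitrary: pre)
  case 0
  then show ?case by simp
next
  case (Suc m)
  let ?w = "u + of_nat N * v"
  let ?T = "\<lambda>j. A (pre @ replicate (Suc m - j) u @ replicate j v)"
  have "?w \<in> F" using assms by (auto intro: add_in_F mult_in_F of_nat_in_F)
  then have "A (pre @ replicate (Suc m) ?w) = (\<Sum>j\<le>m. of_nat (m choose j) * of_nat N ^ j
      * A ((pre @ [?w]) @ replicate (m - j) u @ replicate j v))"
    using Suc.IH[of "pre @ [?w]"] Suc.prems by simp
  also have "\<dots> = (\<Sum>j\<le>m. of_nat (m choose j) * (of_nat N ^ j * ?T j)
                  + of_nat (m choose j) * (of_nat N ^ Suc j * ?T (Suc j)))"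
  proof (rule sum.cong[OF refl])
    fix j assume j: "j \<in> {..m}"
    let ?R = "replicate (m - j) u @ replicate j v"
    have "A (pre @ ?w # ?R) = A (pre @ u # ?R) + A (pre @ (of_nat N * v) # ?R)"
      using Suc.prems j assms by (intro A_add_at) (auto intro: mult_in_F of_nat_in_F)
    also have "A (pre @ (of_nat N * v) # ?R) = of_nat N * A (pre @ v # ?R)"
      using Suc.prems j assms by (intro A_of_nat_mult_at) auto
    also have "A (pre @ u # ?R) = ?T j"
      using j by (subst Suc_diff_le) auto
    also have "A (pre @ v # ?R) = ?T (Suc j)"
      using Suc.prems j assms by (intro A_mset_eq) auto
    finally show "of_nat (m choose j) * of_nat N ^ j * A ((pre @ [?w]) @ ?R)
        = of_nat (m choose j) * (of_nat N ^ j * ?T j) + of_nat (m choose j) * (of_nat N ^ Suc j * ?T (Suc j))"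
      by (simp add: algebra_simps)
  qed
  also have "\<dots> = (\<Sum>j\<le>Suc m. of_nat (Suc m choose j) * (of_nat N ^ j * ?T j))"
    by (subst sum_choose_Suc_split) (simp add: sum.distrib)
  finally show ?case by (simp add: algebra_simps)
qed

text \<open>The coefficient of \<open>N\<close> in \<open>A(pre, x + N y, \<dots>, x + N y) = 0\<close> is a nonzero multiple of
  \<open>A(pre, x, \<dots>, x, y)\<close>; this peels off one free argument at a time.\<close>

lemma A_eq_0_by_polarization:
  assumes "length pre + m = n" "set pre \<subseteq> F" "\<forall>x\<in>F. A (pre @ replicate m x) = 0"
    "length ys = m" "set ys \<subseteq> F"
  shows "A (pre @ ys) = 0"
  using assms
proof (induction m arbitrary: pre ys)
  case 0
  then show ?case using zero_in_F by auto
next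
  case (Suc m)
  obtain y ys' where ys: "ys = y # ys'" using Suc.prems(4) by (cases ys) auto
  have yF: "y \<in> F" using Suc.prems ys by auto
  have "\<forall>x\<in>F. A ((pre @ [y]) @ replicate m x) = 0"
  proof
    fix x assume xF: "x \<in> F"
    define c where "c j = of_nat (Suc m choose j) * A (pre @ replicate (Suc m - j) x @ replicate j y)" for j
    define p where "p = (\<Sum>j\<le>Suc m. monom (c j) j)"
    have "poly p (of_nat N) = 0" for N
    proof -
      have "poly p (of_nat N) = (\<Sum>j\<le>Suc m. c j * of_nat N ^ j)"
        unfolding p_def by (simp add: poly_sum poly_monom)
      also have "\<dots> = A (pre @ replicate (Suc m) (x + of_nat N * y))"
        unfolding c_def using Suc.prems xF yF
        by (subst A_binomial_expansion) (auto simp: algebra_simps)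
      also have "\<dots> = 0" using Suc.prems(3) xF yF add_in_F mult_in_F of_nat_in_F by blast
      finally show ?thesis .
    qed
    then have "p = 0" by (rule poly_eq_0_if_zero_at_nats)
    then have "coeff p 1 = 0" by simp
    then have "A (pre @ replicate m x @ [y]) = 0"
      unfolding p_def c_def by (simp add: coeff_sum del: sum.atMost_Suc of_nat_Suc)
    moreover have "A ((pre @ [y]) @ replicate m x) = A (pre @ replicate m x @ [y])"
      using Suc.prems xF yF by (intro A_mset_eq) auto
    ultimately show "A ((pre @ [y]) @ replicate m x) = 0" by simp
  qed
  then have "A ((pre @ [y]) @ ys') = 0"
    using Suc.prems yF ys by (intro Suc.IH) auto
  then show ?case using ys by simp
qed

definition vanishes_with_ones :: "nat \<Rightarrow> bool" where
  "vanishes_with_ones k \<longleftrightarrow>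
     (\<forall>ys. length ys = k \<and> set ys \<subseteq> F \<longrightarrow> A (ys @ replicate (n - k) 1) = 0)"

lemma A_ones_suffix_eq_0:
  assumes "\<forall>m<k. vanishes_with_ones m" "length ys < k" "length ys + j = n" "set ys \<subseteq> F"
  shows "A (ys @ replicate j 1) = 0"
  using assms unfolding vanishes_with_ones_def
  by (metis add_diff_cancel_left')

lemma A_ones_prefix_eq_0:
  assumes "\<forall>m<k. vanishes_with_ones m" "length ys < k" "j + length ys = n" "set ys \<subseteq> F"
  shows "A (replicate j 1 @ ys) = 0"
proof -
  have "A (replicate j 1 @ ys) = A (ys @ replicate j 1)"
    using assms one_in_F by (intro A_mset_eq) auto
  also have "\<dots> = 0"
    using assms by (intro A_ones_suffix_eq_0) auto
  finally show ?thesis .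
qed

definition square_expansion :: "'k \<Rightarrow> 'k poly" where
  "square_expansion x = (\<Sum>j\<le>n. \<Sum>i\<le>n-j.
     monom (of_nat (n choose j) * of_nat (n-j choose i) * 2^i
       * A (replicate j 1 @ replicate (n-j-i) (x^2) @ replicate i x)) (2*j+i))"

definition product_expansion :: "'k \<Rightarrow> 'k poly" where
  "product_expansion x = (\<Sum>j\<le>n. \<Sum>i\<le>n.
     monom (2^n * of_nat (n choose j) * x^(n-j) * of_nat (n choose i)
       * A (replicate (n-i) x @ replicate i 1)) (j+i))"

lemma poly_square_expansion:
  assumes xF: "x \<in> F"
  shows "poly (square_expansion x) (of_nat N) = A (replicate n ((x + of_nat N)^2))"
proof -
  let ?N = "of_nat N :: 'k"
  let ?a = "x^2 + of_nat (2*N) * x"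
  have x2F: "x^2 \<in> F" using xF by (rule power_in_F)
  have aF: "?a \<in> F" using xF x2F by (intro add_in_F mult_in_F of_nat_in_F)
  have "(x + ?N)^2 = ?a + of_nat (N^2) * 1"
    by (simp add: power2_eq_square algebra_simps)
  then have "A (replicate n ((x + ?N)^2)) = A ([] @ replicate n (?a + of_nat (N^2) * 1))"
    by simp
  also have "\<dots> = (\<Sum>j\<le>n. of_nat (n choose j) * of_nat (N^2) ^ j
      * A ([] @ replicate (n - j) ?a @ replicate j 1))"
    using aF one_in_F by (intro A_binomial_expansion) auto
  also have "\<dots> = (\<Sum>j\<le>n. of_nat (n choose j) * of_nat (N^2) ^ j
      * A (replicate j 1 @ replicate (n - j) ?a))"
    using aF one_in_F by (intro sum.cong refl arg_cong[where f = "\<lambda>t. _ * t"] A_mset_eq) auto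
  also have "\<dots> = (\<Sum>j\<le>n. of_nat (n choose j) * of_nat (N^2) ^ j * (\<Sum>i\<le>n-j.
      of_nat (n-j choose i) * of_nat (2*N) ^ i * A (replicate j 1 @ replicate (n-j-i) (x^2) @ replicate i x)))"
    using one_in_F x2F xF by (intro sum.cong refl arg_cong[where f = "\<lambda>t. _ * t"] A_binomial_expansion) auto
  also have "\<dots> = poly (square_expansion x) ?N"
  proof -
    have "of_nat (N^2) ^ j * of_nat (2*N) ^ i = (2::'k)^i * ?N ^ (2*j+i)" for i j
      by (simp add: power_add power_mult_distrib power_mult)
    then show ?thesis
      unfolding square_expansion_def poly_sum poly_monom sum_distrib_left
      by (intro sum.cong refl) (simp add: algebra_simps)
  qed
  finally show ?thesis by simp
qed

lemma poly_product_expansion: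
  assumes xF: "x \<in> F"
  shows "poly (product_expansion x) (of_nat N)
       = 2^n * (x + of_nat N)^n * A (replicate n (x + of_nat N))"
proof -
  let ?N = "of_nat N :: 'k"
  have "A (replicate n (x + ?N)) = A ([] @ replicate n (x + of_nat N * 1))" by simp
  also have "\<dots> = (\<Sum>i\<le>n. of_nat (n choose i) * ?N ^ i * A ([] @ replicate (n - i) x @ replicate i 1))"
    using xF one_in_F by (intro A_binomial_expansion) auto
  finally have expand_A: "A (replicate n (x + ?N))
      = (\<Sum>i\<le>n. of_nat (n choose i) * ?N ^ i * A (replicate (n - i) x @ replicate i 1))"
    by simp
  have expand_power: "(x + ?N)^n = (\<Sum>j\<le>n. of_nat (n choose j) * ?N ^ j * x ^ (n - j))"
    using binomial_ring[of ?N x n] by (simp add: add.commute)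
  show ?thesis
    unfolding expand_A expand_power product_expansion_def
    by (simp add: poly_sum poly_monom sum_distrib_left sum_distrib_right power_add algebra_simps)
qed

end

locale symmetric_multiadditive_squaring = symmetric_multiadditive F n A
    for F :: "'k::field_char_0 set" and n :: nat and A :: "'k list \<Rightarrow> 'k" +
  assumes squaring: "\<forall>x\<in>F. A (replicate n (x ^ 2)) = 2 ^ n * x ^ n * A (replicate n x)"
begin

lemma square_expansion_eq_product_expansion:
  assumes xF: "x \<in> F"
  shows "square_expansion x = product_expansion x"
proof -
  have "poly (square_expansion x - product_expansion x) (of_nat N) = 0" for N
    using squaring xF add_in_F of_nat_in_F
    by (simp add: poly_square_expansion poly_product_expansion)
  then show ?thesis
    using poly_eq_0_if_zero_at_nats eq_iff_diff_eq_0 by blast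
qed

lemma A_power_with_ones_eq_0:
  assumes kn: "k < n" and below: "\<forall>m<k. vanishes_with_ones m" and xF: "x \<in> F"
  shows "A (replicate k x @ replicate (n - k) 1) = 0"
proof -
  let ?D = "A (replicate k x @ replicate (n - k) 1)"
  have x2F: "x^2 \<in> F" using xF by (rule power_in_F)
  have "coeff (square_expansion x) (2*n-k)
      = of_nat (n choose (n-k)) * of_nat (n-(n-k) choose k) * 2^k
        * A (replicate (n-k) 1 @ replicate (n-(n-k)-k) (x^2) @ replicate k x)"
    unfolding square_expansion_def
  proof (rule coeff_sum_sum_monom_single)
    fix j i assume "j \<in> {..n}" "i \<in> {..n-j}" "(j, i) \<noteq> (n-k, k)" "2*j+i = 2*n-k"
    then have "n-k < j" "j \<le> n" "i \<le> n-j" using kn by auto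
    then have "A (replicate j 1 @ replicate (n-j-i) (x^2) @ replicate i x) = 0"
      using below x2F xF by (intro A_ones_prefix_eq_0) auto
    then show "of_nat (n choose j) * of_nat (n-j choose i) * 2^i
        * A (replicate j 1 @ replicate (n-j-i) (x^2) @ replicate i x) = 0"
      by simp
  qed (use kn in auto)
  also have "A (replicate (n-k) 1 @ replicate (n-(n-k)-k) (x^2) @ replicate k x) = ?D"
    using kn xF one_in_F by (intro A_mset_eq) auto
  finally have square_coeff: "coeff (square_expansion x) (2*n-k) = of_nat (n choose k) * 2^k * ?D"
    using kn by (simp add: binomial_symmetric[symmetric])
  have "coeff (product_expansion x) (2*n-k)
      = 2^n * of_nat (n choose n) * x^(n-n) * of_nat (n choose (n-k))
        * A (replicate (n-(n-k)) x @ replicate (n-k) 1)"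
    unfolding product_expansion_def
  proof (rule coeff_sum_sum_monom_single)
    fix j i assume "j \<in> {..n}" "i \<in> {..n}" "(j, i) \<noteq> (n, n-k)" "j+i = 2*n-k"
    then have "n-k < i" "i \<le> n" using kn by auto
    then have "A (replicate (n-i) x @ replicate i 1) = 0"
      using below xF by (intro A_ones_suffix_eq_0) auto
    then show "2^n * of_nat (n choose j) * x^(n-j) * of_nat (n choose i)
        * A (replicate (n-i) x @ replicate i 1) = 0"
      by simp
  qed (use kn in auto)
  then have product_coeff: "coeff (product_expansion x) (2*n-k) = 2^n * of_nat (n choose k) * ?D"
    using kn by (simp add: binomial_symmetric[symmetric])
  have "(of_nat (n choose k) * 2^k) * ?D = (of_nat (n choose k) * 2^n) * ?D"
    using square_coeff product_coeff square_expansion_eq_product_expansion[OF xF]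
    by (simp add: ac_simps)
  moreover have "of_nat (n choose k) \<noteq> (0::'k)" using kn by simp
  moreover have "(2::'k)^k \<noteq> 2^n"
  proof -
    have "(2::nat)^k \<noteq> 2^n" using kn by simp
    then have "(of_nat (2^k) :: 'k) \<noteq> of_nat (2^n)" using of_nat_eq_iff by blast
    then show ?thesis by simp
  qed
  ultimately show ?thesis by simp
qed

lemma vanishes_with_ones_below:
  shows "k \<le> n \<Longrightarrow> \<forall>m<k. vanishes_with_ones m"
proof (induction k)
  case 0
  then show ?case by simp
next
  case (Suc k)
  then have kn: "k < n" and below: "\<forall>m<k. vanishes_with_ones m" by auto
  have diagonal: "\<forall>x\<in>F. A (replicate (n-k) 1 @ replicate k x) = 0"
  proof
    fix x assume xF: "x \<in> F"
    have "A (replicate (n-k) 1 @ replicate k x) = A (replicate k x @ replicate (n-k) 1)"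
      using kn xF one_in_F by (intro A_mset_eq) auto
    also have "\<dots> = 0" using A_power_with_ones_eq_0[OF kn below xF] .
    finally show "A (replicate (n-k) 1 @ replicate k x) = 0" .
  qed
  have "A (ys @ replicate (n - k) 1) = 0" if "length ys = k" "set ys \<subseteq> F" for ys
  proof -
    have "A (ys @ replicate (n - k) 1) = A (replicate (n-k) 1 @ ys)"
      using that kn one_in_F by (intro A_mset_eq) auto
    also have "\<dots> = 0"
      using diagonal that kn one_in_F by (intro A_eq_0_by_polarization) auto
    finally show ?thesis .
  qed
  then show ?case using below less_Suc_eq unfolding vanishes_with_ones_def by auto
qed

lemma A_square_first:
  assumes n1: "1 \<le> n" and xF: "x \<in> F"
  shows "A (x ^ 2 # replicate (n - 1) x) = 2 * x * A (replicate n x)"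
proof -
  have below: "\<forall>m<n. vanishes_with_ones m" using vanishes_with_ones_below[OF order_refl] .
  have x2F: "x^2 \<in> F" using xF by (rule power_in_F)
  have "coeff (square_expansion x) (n-1)
      = of_nat (n choose 0) * of_nat (n-0 choose (n-1)) * 2^(n-1)
        * A (replicate 0 1 @ replicate (n-0-(n-1)) (x^2) @ replicate (n-1) x)"
    unfolding square_expansion_def
  proof (rule coeff_sum_sum_monom_single)
    fix j i assume "j \<in> {..n}" "i \<in> {..n-j}" "(j, i) \<noteq> (0, n-1)" "2*j+i = n-1"
    then have "0 < j" "j \<le> n" "i \<le> n-j" by auto
    then have "A (replicate j 1 @ replicate (n-j-i) (x^2) @ replicate i x) = 0"
      using below x2F xF by (intro A_ones_prefix_eq_0) auto
    then show "of_nat (n choose j) * of_nat (n-j choose i) * 2^i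
        * A (replicate j 1 @ replicate (n-j-i) (x^2) @ replicate i x) = 0"
      by simp
  qed auto
  then have square_coeff: "coeff (square_expansion x) (n-1)
      = of_nat n * 2^(n-1) * A (x ^ 2 # replicate (n - 1) x)"
    using n1 by (simp add: binomial_symmetric[symmetric] Suc_diff_le)
  have "coeff (product_expansion x) (n-1)
      = 2^n * of_nat (n choose (n-1)) * x^(n-(n-1)) * of_nat (n choose 0)
        * A (replicate (n-0) x @ replicate 0 1)"
    unfolding product_expansion_def
  proof (rule coeff_sum_sum_monom_single)
    fix j i assume "j \<in> {..n}" "i \<in> {..n}" "(j, i) \<noteq> (n-1, 0)" "j+i = n-1"
    then have "0 < i" "i \<le> n" by auto
    then have "A (replicate (n-i) x @ replicate i 1) = 0"
      using below xF by (intro A_ones_suffix_eq_0) auto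
    then show "2^n * of_nat (n choose j) * x^(n-j) * of_nat (n choose i)
        * A (replicate (n-i) x @ replicate i 1) = 0"
      by simp
  qed auto
  then have product_coeff: "coeff (product_expansion x) (n-1)
      = of_nat n * 2^(n-1) * (2 * x * A (replicate n x))"
    using n1 by (simp add: binomial_symmetric[symmetric] power_eq_if ac_simps)
  have "of_nat n * 2^(n-1) \<noteq> (0::'k)" using n1 by simp
  then show ?thesis
    using square_coeff product_coeff square_expansion_eq_product_expansion[OF xF] by simp
qed

end

theorem mainTheorem2:
  fixes F :: "'k::field_char_0 set" and n :: nat and A :: "'k list \<Rightarrow> 'k"
  assumes "subfield F"
    and "n \<ge> 1"
    and "n_additive F n A"
    and "symmetric_map F n A"
    and "\<forall>x\<in>F. A (replicate n (x ^ 2)) = 2 ^ n * x ^ n * A (replicate n x)"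
  shows "(\<forall>k<n. \<forall>xs. length xs = k \<and> set xs \<subseteq> F \<longrightarrow>
            A (xs @ replicate (n - k) 1) = 0)
       \<and> (\<forall>x\<in>F. A (x ^ 2 # replicate (n - 1) x) = 2 * x * A (replicate n x))"
proof -
  interpret symmetric_multiadditive_squaring F n A
    using assms(1,3-5) by unfold_locales
  show ?thesis
    using vanishes_with_ones_below[OF order_refl] A_square_first[OF assms(2)]
    unfolding vanishes_with_ones_def by blast
qed

end
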